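(* Let $m\in\mathbb Z$, $\delta>0$, $C>0$. For all $N\ge1$ and $z$ with $\mathrm{Re}(z)\le-\delta$, $|z|\le C$, $$\frac{e^{z/N}}{(e^{z/N}-1)^{m+1}(e^{z/N})_N}\ll N^{m+1}\exp\big(N\,\mathrm{Re}(p(z))\big),$$ with implied constant depending only on $m,\delta,C$.
   Context: $(q)_N:=(1-q)(1-q^2)\cdots(1-q^N)$. $p(z):=\dfrac{\mathrm{Li}_2(e^{z})-\mathrm{Li}_2(1)}{z}$, where $\mathrm{Li}_2(w)=\sum_{n\ge1}w^n/n^2$ for $|w|\le1$ and $\mathrm{Li}_2(1)=\pi^2/6$. *)

theory Defs
  imports "HOL-Analysis.Analysis"
begin

definition qpoch :: "complex \<Rightarrow> nat \<Rightarrow> complex" where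
  "qpoch q N = (\<Prod>k=1..N. 1 - q ^ k)"

definition Li2 :: "complex \<Rightarrow> complex" where
  "Li2 w = (\<Sum>n. w ^ (Suc n) / of_nat (Suc n) ^ 2)"

definition pfun :: "complex \<Rightarrow> complex" where
  "pfun z = (Li2 (exp z) - of_real (pi ^ 2 / 6)) / z"

end

theory Submission
  imports Defs "HOL-Real_Asymp.Real_Asymp"
begin

text \<open>
  Put \<open>q = e\<^sup>z\<^sup>/\<^sup>N\<close> and \<open>\<rho>(v) = 1/(e\<^sup>v - 1) - 1/v\<close> (\<open>exp_pole_remainder\<close>).
  Expanding each \<open>-Log(1 - q\<^sup>k)\<close> and \<open>Li\<^sub>2(e\<^sup>z)\<close> as power series and summing the
  geometric sums in \<open>k\<close>, the difference \<open>-log |(q)\<^sub>N| - N Re p(z)\<close> becomes a series whose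
  \<open>j\<close>-th term is \<open>Re((1 - e\<^sup>j\<^sup>z) \<rho>(-jz/N))/j\<close>. As \<open>\<rho>(v) = -1/2 + O(|v|)\<close> near \<open>0\<close>,
  \<open>|\<rho>(v)| \<le> 2/Re v\<close> and \<open>Re(1 - e\<^sup>j\<^sup>z) \<ge> 0\<close>, the \<open>j\<close>-th term is \<open>O(1/N)\<close> for \<open>j \<le> N\<close>
  and \<open>O(N/j\<^sup>2)\<close> beyond, so the series is bounded uniformly in \<open>N\<close>. Together with
  \<open>|q - 1| \<asymp> 1/N\<close> this gives the estimate.
\<close>

lemma norm_exp_minus_one_le: "norm (exp w - 1) \<le> exp \<bar>Re w\<bar> * norm w"
  using Taylor_exp[of w 0] by simp

lemma norm_exp_minus_quadratic_le:
  "norm (exp w - 1 - w - w\<^sup>2 / 2) \<le> exp \<bar>Re w\<bar> * norm w ^ 3 / 2"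
  using Taylor_exp[of w 2] by (simp add: eval_nat_numeral diff_diff_eq)

definition exp_pole_remainder :: "complex \<Rightarrow> complex" where
  "exp_pole_remainder v = 1 / (exp v - 1) - 1 / v"

lemma norm_exp_pole_remainder_le:
  assumes "Re v > 0"
  shows "norm (exp_pole_remainder v) \<le> 2 / Re v"
proof -
  have "Re v \<le> exp (Re v) - 1" using exp_ge_add_one_self[of "Re v"] by linarith
  also have "\<dots> \<le> norm (exp v - 1)"
    using norm_triangle_ineq2[of "exp v" 1] by simp
  finally have exp_v: "Re v \<le> norm (exp v - 1)" .
  have v: "Re v \<le> norm v" by (rule complex_Re_le_cmod)
  have pos: "0 < norm (exp v - 1)" "0 < norm v" using exp_v v assms by linarith+
  have "norm (exp_pole_remainder v) \<le> norm (1 / (exp v - 1)) + norm (1 / v)"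
    unfolding exp_pole_remainder_def by (rule norm_triangle_ineq4)
  also have "\<dots> \<le> 1 / Re v + 1 / Re v"
    using exp_v v assms pos by (intro add_mono) (auto simp: norm_divide intro!: divide_left_mono)
  finally show ?thesis by simp
qed

lemma norm_exp_pole_remainder_plus_half_le:
  assumes "v \<noteq> 0" "norm v \<le> 1/2"
  shows "norm (exp_pole_remainder v + 1/2) \<le> 3 * norm v"
proof -
  define E where "E = exp v - 1 - v - v\<^sup>2 / 2"
  have v_pos: "norm v > 0" using assms(1) by simp
  have "exp \<bar>Re v\<bar> \<le> exp (norm v)" by (simp add: abs_Re_le_cmod)
  also have "\<dots> \<le> 2" using exp_bound_half[of "norm v"] assms(2) by simp
  finally have "exp \<bar>Re v\<bar> * norm v ^ 3 / 2 \<le> 2 * norm v ^ 3 / 2"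
    by (intro divide_right_mono mult_right_mono) auto
  hence E: "norm E \<le> norm v ^ 3"
    using norm_exp_minus_quadratic_le[of v] unfolding E_def by linarith
  have square_le: "norm v ^ 2 \<le> norm v / 2"
    using mult_left_mono[OF assms(2), of "norm v"] by (simp add: power2_eq_square)
  have cube_le: "norm v ^ 3 \<le> norm v / 4"
    using mult_left_mono[OF square_le, of "norm v"] mult_left_mono[OF assms(2), of "norm v"]
    by (simp add: power2_eq_square power3_eq_cube)
  have "norm v \<le> norm (exp v - 1) + norm (v\<^sup>2 / 2) + norm E"
    using norm_triangle_ineq4[of "exp v - 1" "v\<^sup>2 / 2 + E"] norm_triangle_ineq[of "v\<^sup>2 / 2" E]
    unfolding E_def by (simp add: algebra_simps)
  hence exp_v: "norm v / 2 \<le> norm (exp v - 1)"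
    using E cube_le square_le by (simp add: norm_divide norm_power)
  hence exp_v_nonzero: "exp v - 1 \<noteq> 0" using v_pos by auto
  \<comment> \<open>Writing \<open>exp v - 1 = v + v\<^sup>2/2 + E\<close>, the terms of order \<open>v\<^sup>2\<close> cancel in the numerator.\<close>
  have "exp_pole_remainder v + 1/2 = (v ^ 3 / 2 + (v - 2) * E) / (2 * v * (exp v - 1))"
    using assms(1) exp_v_nonzero unfolding exp_pole_remainder_def E_def
    by (simp add: field_simps power2_eq_square power3_eq_cube)
  also have "norm \<dots> \<le> 3 * norm v ^ 3 / norm v ^ 2"
  proof -
    have "norm (v - 2) \<le> 5/2" using norm_triangle_ineq4[of v 2] assms(2) by simp
    hence "norm ((v - 2) * E) \<le> 5/2 * norm v ^ 3"
      unfolding norm_mult using E by (intro mult_mono) auto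
    hence "norm (v ^ 3 / 2 + (v - 2) * E) \<le> 3 * norm v ^ 3"
      using norm_triangle_ineq[of "v ^ 3 / 2" "(v - 2) * E"] by (simp add: norm_divide norm_power)
    moreover have "norm v ^ 2 \<le> norm (2 * v * (exp v - 1))"
      using exp_v v_pos by (simp add: norm_mult power2_eq_square)
    ultimately show ?thesis
      using v_pos by (simp add: norm_divide frac_le)
  qed
  also have "\<dots> = 3 * norm v" using v_pos by (simp add: power2_eq_square power3_eq_cube)
  finally show ?thesis .
qed

lemma norm_exp_pole_remainder_plus_half_le_sector:
  assumes "Re v > 0" "s > 0" "s * norm v \<le> Re v"
  shows "norm (exp_pole_remainder v + 1/2) \<le> (8 / s + 3) * norm v"
proof (cases "norm v \<le> 1/2")
  case True
  have "v \<noteq> 0" using assms(1) by auto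
  from this True have "norm (exp_pole_remainder v + 1/2) \<le> 3 * norm v"
    by (rule norm_exp_pole_remainder_plus_half_le)
  also have "\<dots> \<le> (8 / s + 3) * norm v" using assms(2) by (simp add: algebra_simps)
  finally show ?thesis .
next
  case False
  have "norm (exp_pole_remainder v + 1/2) \<le> 2 / Re v + 1/2"
    using norm_triangle_ineq[of "exp_pole_remainder v" "1/2"] norm_exp_pole_remainder_le[OF assms(1)]
    by simp
  also have "2 / Re v \<le> 2 / (s * norm v)"
    using assms False by (intro divide_left_mono mult_pos_pos) auto
  also have "\<dots> \<le> 8 / s * norm v"
  proof -
    have "1 \<le> 4 * norm v * norm v" using False mult_mono[of "1/2" "norm v" "1/2" "norm v"] by simp
    moreover have "norm v > 0" using False by linarith
    ultimately have "2 / norm v \<le> 8 * norm v" by (simp add: pos_divide_le_eq)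
    thus ?thesis using assms(2) by (simp add: field_simps divide_right_mono)
  qed
  finally show ?thesis using False by (simp add: algebra_simps)
qed

lemma Re_one_minus_mult_le:
  fixes \<zeta> w :: complex
  assumes "norm \<zeta> \<le> 1"
  shows "Re ((1 - \<zeta>) * w) \<le> 2 * norm (w + 1/2)" and "Re ((1 - \<zeta>) * w) \<le> 2 * norm w"
proof -
  have one_minus: "norm (1 - \<zeta>) \<le> 2"
    using norm_triangle_ineq4[of 1 \<zeta>] assms by simp
  have "Re \<zeta> \<le> 1" using complex_Re_le_cmod[of \<zeta>] assms by linarith
  hence "Re ((1 - \<zeta>) * w) \<le> Re ((1 - \<zeta>) * (w + 1/2))" by (simp add: algebra_simps)
  also have "\<dots> \<le> norm ((1 - \<zeta>) * (w + 1/2))" by (rule complex_Re_le_cmod)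
  also have "\<dots> \<le> 2 * norm (w + 1/2)" unfolding norm_mult using one_minus by (simp add: mult_right_mono)
  finally show "Re ((1 - \<zeta>) * w) \<le> 2 * norm (w + 1/2)" .
  have "Re ((1 - \<zeta>) * w) \<le> norm ((1 - \<zeta>) * w)" by (rule complex_Re_le_cmod)
  also have "\<dots> \<le> 2 * norm w" unfolding norm_mult using one_minus by (simp add: mult_right_mono)
  finally show "Re ((1 - \<zeta>) * w) \<le> 2 * norm w" .
qed

lemma two_regime_bound_le:
  fixes x \<alpha> \<beta> :: real and N n :: nat
  assumes "N \<ge> 1" "\<alpha> \<ge> 0" "\<beta> \<ge> 0"
    and "x \<le> \<alpha> * real (Suc n) / real N" "x \<le> \<beta> * real N / real (Suc n)"
  shows "x / real (Suc n) \<le> 4 * (\<alpha> + \<beta>) * (real N / ((real n + real N) * (real n + real N + 1)))"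
proof -
  have N_pos: "real N > 0" using assms(1) by simp
  have denom_pos: "(real n + real N) * (real n + real N + 1) > 0" using N_pos by simp
  have "x / real (Suc n) \<le> 4 * \<alpha> * (real N / ((real n + real N) * (real n + real N + 1)))"
    if "Suc n \<le> N"
  proof -
    have "x / real (Suc n) \<le> 4 * \<alpha> * (real N / ((2 * real N) * (2 * real N)))"
      using assms(4) N_pos by (simp add: field_simps del: of_nat_Suc)
    also have "\<dots> \<le> 4 * \<alpha> * (real N / ((real n + real N) * (real n + real N + 1)))"
      using that assms(2) denom_pos N_pos by (intro mult_left_mono divide_left_mono mult_mono) auto
    finally show ?thesis .
  qed
  moreover have "x / real (Suc n) \<le> 4 * \<beta> * (real N / ((real n + real N) * (real n + real N + 1)))"
    if "\<not> Suc n \<le> N"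
  proof -
    have "x / real (Suc n) \<le> 4 * \<beta> * (real N / ((2 * real (Suc n)) * (2 * real (Suc n))))"
      using assms(5) N_pos by (simp add: field_simps del: of_nat_Suc)
    also have "\<dots> \<le> 4 * \<beta> * (real N / ((real n + real N) * (real n + real N + 1)))"
      using that assms(3) denom_pos N_pos by (intro mult_left_mono divide_left_mono mult_mono) auto
    finally show ?thesis .
  qed
  moreover have "0 \<le> real N / ((real n + real N) * (real n + real N + 1))" using denom_pos by simp
  ultimately show ?thesis using assms(2,3) by (smt (verit) mult_right_mono distrib_left)
qed

lemma Re_log_qpoch_term_le:
  fixes z :: complex and \<delta> C :: real and N n :: nat
  assumes "\<delta> > 0" "C > 0" "N \<ge> 1" "Re z \<le> - \<delta>" "norm z \<le> C"
  defines "j \<equiv> Suc n"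
  shows "Re ((1 - exp (of_nat j * z)) * exp_pole_remainder (- (of_nat j * z / of_nat N)) / of_nat j)
           \<le> (8 * (8 * C / \<delta> + 3) * C + 16 / \<delta>) * (real N / ((real n + real N) * (real n + real N + 1)))"
proof -
  define v where "v = - (of_nat j * z / of_nat N)"
  define c where "c = 8 * C / \<delta> + 3"
  define X where "X = (1 - exp (of_nat j * z)) * exp_pole_remainder v"
  have N_pos: "real N > 0" and j_pos: "real j > 0" using assms(3) by (auto simp: j_def)
  have c_pos: "c > 0" using assms(1,2) by (simp add: c_def add_pos_pos)
  have "Re v = real j * (- Re z) / real N" by (simp add: v_def)
  hence Re_v: "real j * \<delta> / real N \<le> Re v"
    using assms(4) j_pos N_pos by (simp only:) (intro divide_right_mono mult_left_mono; simp)
  have Re_v_pos: "Re v > 0" using Re_v assms(1) j_pos N_pos by (smt (verit) divide_pos_pos mult_pos_pos)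
  have norm_v: "norm v \<le> real j * C / real N"
    using assms(5) j_pos N_pos by (simp add: v_def norm_mult norm_divide divide_right_mono)
  have "\<delta> / C * norm v \<le> \<delta> / C * (real j * C / real N)"
    using norm_v assms(1,2) by (intro mult_left_mono) auto
  also have "\<dots> = real j * \<delta> / real N" using assms(2) by simp
  finally have sector: "\<delta> / C * norm v \<le> Re v" using Re_v by linarith
  have rem_le: "norm (exp_pole_remainder v + 1/2) \<le> c * norm v"
    using norm_exp_pole_remainder_plus_half_le_sector[OF Re_v_pos _ sector] assms(1,2) by (simp add: c_def)
  have "norm (exp (of_nat j * z)) \<le> 1"
    using assms(1,4) by (simp add: mult_nonneg_nonpos)
  note X_le = Re_one_minus_mult_le[OF this, of "exp_pole_remainder v", folded X_def]
  have "Re X \<le> 2 * (c * (real j * C / real N))"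
    using X_le(1) rem_le norm_v c_pos by (smt (verit) mult_left_mono)
  hence small: "Re X \<le> 2 * c * C * real j / real N" by (simp add: mult_ac)
  have "Re X \<le> 2 * (2 / (real j * \<delta> / real N))"
    using X_le(2) norm_exp_pole_remainder_le[OF Re_v_pos] Re_v assms(1) j_pos N_pos
    by (smt (verit) divide_left_mono divide_pos_pos mult_pos_pos)
  hence large: "Re X \<le> 4 / \<delta> * real N / real j" by (simp add: field_simps)
  have "Re X / real j \<le> 4 * (2 * c * C + 4 / \<delta>) * (real N / ((real n + real N) * (real n + real N + 1)))"
    using two_regime_bound_le[OF assms(3), of "2 * c * C" "4 / \<delta>" "Re X" n] small large c_pos assms(1,2)
    unfolding j_def by simp
  thus ?thesis by (simp add: X_def v_def c_def algebra_simps)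
qed

lemma sums_inverse_consecutive_products:
  fixes a :: real
  assumes "a > 0"
  shows "(\<lambda>n. a / ((real n + a) * (real n + a + 1))) sums 1"
proof -
  define f where "f n = a / (real n + a)" for n
  have "f \<longlonglongrightarrow> 0" unfolding f_def by real_asymp
  hence "(\<lambda>n. f n - f (Suc n)) sums (f 0 - 0)" by (rule telescope_sums')
  moreover have "f n - f (Suc n) = a / ((real n + a) * (real n + a + 1))" for n
    using assms by (simp add: f_def field_simps)
  ultimately show ?thesis using assms by (simp add: f_def)
qed

lemma Ln_one_minus_sums:
  assumes "norm w < 1"
  shows "(\<lambda>n. w ^ Suc n / of_nat (Suc n)) sums - Ln (1 - w)"
proof -
  have "(\<lambda>n. - ((- (- w)) ^ n) / of_nat n) sums ln (1 + - w)"
    by (rule Ln_series') (use assms in simp)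
  hence "(\<lambda>n. w ^ n / of_nat n) sums - Ln (1 - w)"
    using sums_minus by fastforce
  thus ?thesis by (subst sums_Suc_iff) simp
qed

lemma qpoch_nonzero:
  assumes "norm q < 1"
  shows "qpoch q N \<noteq> 0"
proof -
  have "norm (q ^ k) < 1" if "k \<ge> 1" for k
    using assms that by (simp add: norm_power power_less_one_iff)
  hence "q ^ k \<noteq> 1" if "k \<ge> 1" for k using that by fastforce
  thus ?thesis by (simp add: qpoch_def)
qed

lemma sums_minus_ln_norm_qpoch:
  assumes "norm q < 1"
  shows "(\<lambda>n. Re (\<Sum>k=1..N. (q ^ Suc n) ^ k) / real (Suc n)) sums - ln (norm (qpoch q N))"
proof -
  have q_pow: "norm (q ^ k) < 1" if "k \<ge> 1" for k
    using assms that by (simp add: norm_power power_less_one_iff)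
  hence nonzero: "1 - q ^ k \<noteq> 0" if "k \<ge> 1" for k using that by fastforce
  have "(\<lambda>n. \<Sum>k=1..N. (q ^ k) ^ Suc n / of_nat (Suc n)) sums (\<Sum>k=1..N. - Ln (1 - q ^ k))"
    using q_pow by (intro sums_sum Ln_one_minus_sums) auto
  moreover have "Re (\<Sum>k=1..N. (q ^ k) ^ Suc n / of_nat (Suc n)) = Re (\<Sum>k=1..N. (q ^ Suc n) ^ k) / real (Suc n)" for n
    by (simp only: sum_divide_distrib[symmetric] Re_divide_of_nat flip: power_mult) (simp add: mult.commute)
  ultimately have "(\<lambda>n. Re (\<Sum>k=1..N. (q ^ Suc n) ^ k) / real (Suc n)) sums Re (\<Sum>k=1..N. - Ln (1 - q ^ k))"
    using sums_Re by fastforce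
  also have "Re (\<Sum>k=1..N. - Ln (1 - q ^ k)) = - (\<Sum>k=1..N. ln (norm (1 - q ^ k)))"
    using nonzero by (simp add: Re_sum sum_negf)
  also have "\<dots> = - ln (norm (qpoch q N))"
    unfolding qpoch_def prod_norm[symmetric] using nonzero by (subst ln_prod) auto
  finally show ?thesis .
qed

lemma Li2_sums:
  assumes "norm w \<le> 1"
  shows "(\<lambda>n. w ^ Suc n / of_nat (Suc n) ^ 2) sums Li2 w"
proof -
  have "summable (\<lambda>n. 1 / (real n + 1) ^ 2)"
    using inverse_squares_sums by (simp add: sums_summable add.commute)
  moreover have "norm (w ^ Suc n / of_nat (Suc n) ^ 2) \<le> 1 / (real n + 1) ^ 2" for n
  proof -
    have "norm (w ^ Suc n / of_nat (Suc n) ^ 2) = norm w ^ Suc n / (real n + 1) ^ 2"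
      by (simp only: norm_divide norm_power norm_of_nat) (simp add: add.commute)
    also have "\<dots> \<le> 1 / (real n + 1) ^ 2"
      using assms by (intro divide_right_mono power_le_one) auto
    finally show ?thesis .
  qed
  ultimately have "summable (\<lambda>n. w ^ Suc n / of_nat (Suc n) ^ 2)"
    by (rule summable_comparison_test'[where N = 0])
  thus ?thesis unfolding Li2_def by (rule summable_sums)
qed

lemma pfun_sums:
  assumes "norm (exp z) \<le> 1"
  shows "(\<lambda>n. (exp z ^ Suc n - 1) / (z * of_nat (Suc n) ^ 2)) sums pfun z"
proof -
  have "(\<lambda>n. 1 / (real n + 1) ^ 2) sums (pi ^ 2 / 6)"
    using inverse_squares_sums by (simp add: add.commute)
  hence "(\<lambda>n. complex_of_real (1 / (real n + 1) ^ 2)) sums complex_of_real (pi ^ 2 / 6)"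
    by (rule sums_of_real)
  hence "(\<lambda>n. (exp z ^ Suc n / of_nat (Suc n) ^ 2 - complex_of_real (1 / (real n + 1) ^ 2)) / z)
           sums ((Li2 (exp z) - of_real (pi ^ 2 / 6)) / z)"
    by (intro sums_divide sums_diff Li2_sums assms)
  thus ?thesis by (simp add: pfun_def diff_divide_distrib add.commute mult.commute)
qed

lemma log_qpoch_term_eq:
  fixes z :: complex and N j :: nat
  assumes "N > 0" "j > 0" "Re z < 0"
  defines "q \<equiv> exp (z / of_nat N)"
  shows "(\<Sum>k=1..N. (q ^ j) ^ k) / of_nat j - of_nat N * ((exp z ^ j - 1) / (z * of_nat j ^ 2))
         = (1 - exp (of_nat j * z)) * exp_pole_remainder (- (of_nat j * z / of_nat N)) / of_nat j"
proof -
  define u where "u = q ^ j"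
  have u: "u = exp (of_nat j * z / of_nat N)"
    unfolding u_def q_def by (metis exp_of_nat_mult times_divide_eq_right)
  have u_N: "u ^ N = exp (of_nat j * z)" "exp z ^ j = exp (of_nat j * z)"
    using assms(1) by (simp_all add: u flip: exp_of_nat_mult)
  have "Re (of_nat j * z / of_nat N) < 0" using assms by (simp add: mult_pos_neg divide_neg_pos)
  hence "norm u < 1" by (simp add: u)
  hence u_ne_1: "u \<noteq> 1" by auto
  have "(1 - u) * (\<Sum>k=1..N. u ^ k) = u - u ^ Suc N"
    using sum_gp_multiplied[of 1 N u] assms(1) by simp
  hence geometric: "(\<Sum>k=1..N. u ^ k) = u * (1 - u ^ N) / (1 - u)"
    using u_ne_1 by (simp add: field_simps)
  have z: "z \<noteq> 0" using assms(3) by auto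
  have remainder: "exp_pole_remainder (- (of_nat j * z / of_nat N)) = u / (1 - u) + of_nat N / (of_nat j * z)"
    using assms(1,2) z u_ne_1 by (simp add: exp_pole_remainder_def u exp_minus field_simps)
  show ?thesis
    unfolding remainder u_def[symmetric] geometric u_N(2) u_N(1)[symmetric]
    using assms(1,2) z u_ne_1 by (simp add: field_simps power2_eq_square)
qed

lemma minus_ln_norm_qpoch_le:
  fixes z :: complex and \<delta> C :: real and N :: nat
  assumes "\<delta> > 0" "C > 0" "N \<ge> 1" "Re z \<le> - \<delta>" "norm z \<le> C"
  shows "- ln (norm (qpoch (exp (z / of_nat N)) N)) - real N * Re (pfun z)
           \<le> 8 * (8 * C / \<delta> + 3) * C + 16 / \<delta>"
proof -
  define A where "A = 8 * (8 * C / \<delta> + 3) * C + 16 / \<delta>"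
  define q where "q = exp (z / of_nat N)"
  have N_pos: "real N > 0" using assms(3) by simp
  have "Re z / real N < 0" using assms(1,4) N_pos by (simp add: divide_neg_pos)
  hence q: "norm q < 1" by (simp add: q_def)
  have term_le: "Re (\<Sum>k=1..N. (q ^ Suc n) ^ k) / real (Suc n)
          - real N * Re ((exp z ^ Suc n - 1) / (z * of_nat (Suc n) ^ 2))
        \<le> A * (real N / ((real n + real N) * (real n + real N + 1)))" for n
  proof -
    have "Re (\<Sum>k=1..N. (q ^ Suc n) ^ k) / real (Suc n)
            - real N * Re ((exp z ^ Suc n - 1) / (z * of_nat (Suc n) ^ 2))
          = Re ((\<Sum>k=1..N. (q ^ Suc n) ^ k) / of_nat (Suc n)
            - of_nat N * ((exp z ^ Suc n - 1) / (z * of_nat (Suc n) ^ 2)))"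
      by (simp del: times_divide_eq_right of_nat_Suc)
    also have "\<dots> = Re ((1 - exp (of_nat (Suc n) * z))
                     * exp_pole_remainder (- (of_nat (Suc n) * z / of_nat N)) / of_nat (Suc n))"
      using assms(1,3,4) by (simp only: q_def log_qpoch_term_eq)
    also have "\<dots> \<le> A * (real N / ((real n + real N) * (real n + real N + 1)))"
      unfolding A_def by (rule Re_log_qpoch_term_le[OF assms])
    finally show ?thesis .
  qed
  have "norm (exp z) \<le> 1" using assms(1,4) by simp
  hence "(\<lambda>n. Re (\<Sum>k=1..N. (q ^ Suc n) ^ k) / real (Suc n)
                - real N * Re ((exp z ^ Suc n - 1) / (z * of_nat (Suc n) ^ 2)))
          sums (- ln (norm (qpoch q N)) - real N * Re (pfun z))"
    by (intro sums_diff sums_mult sums_Re sums_minus_ln_norm_qpoch pfun_sums q)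
  moreover have "(\<lambda>n. A * (real N / ((real n + real N) * (real n + real N + 1)))) sums (A * 1)"
    using N_pos by (intro sums_mult sums_inverse_consecutive_products)
  ultimately have "- ln (norm (qpoch q N)) - real N * Re (pfun z) \<le> A * 1"
    by (rule sums_le[OF term_le])
  thus ?thesis by (simp add: A_def q_def)
qed

lemma norm_exp_minus_one_ge:
  assumes "Re w \<le> - x" "x \<ge> 0"
  shows "x / (1 + x) \<le> norm (exp w - 1)"
proof -
  have "exp (Re w) \<le> exp (- x)" using assms(1) by simp
  also have "\<dots> \<le> 1 / (1 + x)"
    using exp_ge_add_one_self[of x] assms(2) by (simp add: exp_minus field_simps)
  finally have "x / (1 + x) \<le> 1 - exp (Re w)" using assms(2) by (simp add: field_simps)
  also have "\<dots> \<le> norm (exp w - 1)"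
    using norm_triangle_ineq2[of 1 "exp w"] by (simp add: norm_minus_commute)
  finally show ?thesis .
qed

lemma norm_exp_div_minus_one_bounds:
  fixes z :: complex and \<delta> C :: real and N :: nat
  assumes "\<delta> > 0" "N \<ge> 1" "Re z \<le> - \<delta>" "norm z \<le> C"
  shows "\<delta> / (1 + \<delta>) / real N \<le> norm (exp (z / of_nat N) - 1)"
    and "norm (exp (z / of_nat N) - 1) \<le> C * exp C / real N"
proof -
  have N_pos: "real N > 0" using assms(2) by simp
  have "real N + \<delta> \<le> (1 + \<delta>) * real N"
    using assms(1,2) mult_left_mono[of 1 "real N" \<delta>] by (simp add: algebra_simps)
  hence "\<delta> / ((1 + \<delta>) * real N) \<le> \<delta> / (real N + \<delta>)"
    using assms(1) N_pos by (intro divide_left_mono) auto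
  hence "\<delta> / (1 + \<delta>) / real N \<le> (\<delta> / real N) / (1 + \<delta> / real N)"
    using assms(1) N_pos by (simp add: field_simps)
  also have "\<dots> \<le> norm (exp (z / of_nat N) - 1)"
    using assms(1,3) N_pos divide_right_mono[of "Re z" "- \<delta>" "real N"]
    by (intro norm_exp_minus_one_ge) auto
  finally show "\<delta> / (1 + \<delta>) / real N \<le> norm (exp (z / of_nat N) - 1)" .
  have norm_w: "norm (z / of_nat N) \<le> C / real N"
    using assms(4) N_pos by (simp add: norm_divide divide_right_mono)
  also have "\<dots> \<le> C"
    using assms(2) order_trans[OF norm_ge_zero assms(4)] mult_left_mono[of 1 "real N" C]
    by (simp add: divide_le_eq)
  finally have "exp \<bar>Re (z / of_nat N)\<bar> \<le> exp C" using abs_Re_le_cmod by (metis exp_le_cancel_iff order_trans)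
  hence "norm (exp (z / of_nat N) - 1) \<le> exp C * (C / real N)"
    using norm_exp_minus_one_le[of "z / of_nat N"] norm_w by (smt (verit) mult_mono exp_gt_zero norm_ge_zero)
  thus "norm (exp (z / of_nat N) - 1) \<le> C * exp C / real N" by (simp add: mult.commute)
qed

lemma inverse_powi_le_of_bounds:
  fixes x a b t :: real and e :: int
  assumes "a > 0" "b > 0" "t > 0" "a / t \<le> x" "x \<le> b / t"
  shows "1 / x powi e \<le> (a powi (- e) + b powi (- e)) * t powi e"
proof -
  have x_pos: "x > 0" using assms(1,3,4) by (smt (verit) divide_pos_pos)
  show ?thesis
  proof (cases "e \<ge> 0")
    case True
    then obtain k where k: "e = int k" by (metis nonneg_eq_int)
    have "(a / t) ^ k \<le> x ^ k" using assms by (intro power_mono) auto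
    hence "1 / x ^ k \<le> a powi (- int k) * t ^ k"
      using assms x_pos by (simp add: power_divide power_int_minus_divide field_simps)
    also have "\<dots> \<le> (a powi (- int k) + b powi (- int k)) * t ^ k"
      using assms by (intro mult_right_mono) auto
    finally show ?thesis by (simp add: k)
  next
    case False
    then obtain k where k: "e = - int k" by (metis nonneg_eq_int neg_0_le_iff_le linorder_linear minus_minus)
    have "x ^ k \<le> (b / t) ^ k" using assms x_pos by (intro power_mono) auto
    also have "\<dots> \<le> (a powi int k + b powi int k) * (1 / t ^ k)"
      using assms by (simp add: power_divide divide_right_mono)
    finally show ?thesis by (simp add: k power_int_minus_divide)
  qed
qed

lemma inverse_norm_qpoch_le:
  fixes z :: complex and \<delta> C :: real and N :: nat
  assumes "\<delta> > 0" "C > 0" "N \<ge> 1" "Re z \<le> - \<delta>" "norm z \<le> C"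
  shows "1 / norm (qpoch (exp (z / of_nat N)) N)
           \<le> exp (8 * (8 * C / \<delta> + 3) * C + 16 / \<delta>) * exp (real N * Re (pfun z))"
proof -
  have "Re z / real N < 0" using assms(1,3,4) by (simp add: divide_neg_pos)
  hence "qpoch (exp (z / of_nat N)) N \<noteq> 0" by (intro qpoch_nonzero) simp
  hence "1 / norm (qpoch (exp (z / of_nat N)) N) = exp (- ln (norm (qpoch (exp (z / of_nat N)) N)))"
    by (simp add: exp_minus divide_inverse)
  also have "\<dots> \<le> exp (8 * (8 * C / \<delta> + 3) * C + 16 / \<delta> + real N * Re (pfun z))"
    using minus_ln_norm_qpoch_le[OF assms] by simp
  finally show ?thesis by (simp add: exp_add)
qed

theorem corollary2p5:
  fixes m :: int and \<delta> C :: real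
  assumes "\<delta> > 0" and "C > 0"
  shows "\<exists>K. \<forall>N::nat. \<forall>z::complex. N \<ge> 1 \<longrightarrow> Re z \<le> - \<delta> \<longrightarrow> cmod z \<le> C \<longrightarrow>
           cmod (exp (z / of_nat N) /
                 ((exp (z / of_nat N) - 1) powi (m + 1) * qpoch (exp (z / of_nat N)) N))
           \<le> K * real N powi (m + 1) * exp (real N * Re (pfun z))"
proof -
  define a where "a = \<delta> / (1 + \<delta>)"
  define b where "b = C * exp C"
  define K\<^sub>1 where "K\<^sub>1 = a powi (- (m + 1)) + b powi (- (m + 1))"
  define K\<^sub>2 where "K\<^sub>2 = exp (8 * (8 * C / \<delta> + 3) * C + 16 / \<delta>)"
  show ?thesis
  proof (intro exI[of _ "K\<^sub>1 * K\<^sub>2"] allI impI)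
    fix N :: nat and z :: complex
    assume N: "N \<ge> 1" and z: "Re z \<le> - \<delta>" "cmod z \<le> C"
    define q where "q = exp (z / of_nat N)"
    have q_minus_one: "1 / norm (q - 1) powi (m + 1) \<le> K\<^sub>1 * real N powi (m + 1)"
      using assms N norm_exp_div_minus_one_bounds[OF assms(1) N z] unfolding K\<^sub>1_def
      by (intro inverse_powi_le_of_bounds) (simp_all add: a_def b_def q_def)
    have qpoch: "1 / norm (qpoch q N) \<le> K\<^sub>2 * exp (real N * Re (pfun z))"
      unfolding q_def K\<^sub>2_def by (rule inverse_norm_qpoch_le[OF assms N z])
    have "norm q \<le> 1" using assms(1) z(1) N by (simp add: q_def divide_nonpos_pos)
    hence "norm q * (1 / norm (q - 1) powi (m + 1) * (1 / norm (qpoch q N)))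
        \<le> 1 * (K\<^sub>1 * real N powi (m + 1) * (K\<^sub>2 * exp (real N * Re (pfun z))))"
      using order_trans[OF _ q_minus_one] by (intro mult_mono q_minus_one qpoch) auto
    thus "cmod (exp (z / of_nat N) /
                 ((exp (z / of_nat N) - 1) powi (m + 1) * qpoch (exp (z / of_nat N)) N))
           \<le> K\<^sub>1 * K\<^sub>2 * real N powi (m + 1) * exp (real N * Re (pfun z))"
      by (simp add: q_def norm_divide norm_mult norm_power_int mult_ac)
  qed
qed

end
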